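(* Assume $\omega$ satisfies $\omega(x)/\mathrm{tr}\,\omega(x)\ge2\kappa I$ for all $x\in\mathbb Z^d$. There exist constants $\alpha_0\in(0,1)$ and $A_0\ge1$ depending on $\kappa$ (and $d$) such that for any $\alpha\in(0,\alpha_0)$ and $A\ge A_0$: (i) $L_\omega(e^{-2\alpha|x|/R})\le0$ for $x\in B_R\setminus B_{R/2}$, whenever $R\ge A_0$; (ii) $L_\omega(e^{-A|x|^2})\ge-\mathbb 1_{x=0}$ for all $x\in\mathbb Z^d$; (iii) $L_\omega(e^{-A|x|^2/R^2})>0$ for $x\in B_R\setminus B_{R/2}$, whenever $R\ge A^2$.
   Context: $\omega:\mathbb Z^d\to\{$positive-definite diagonal matrices$\}$, $\omega(x)=\mathrm{diag}[\omega_1(x),\dots,\omega_d(x)]$, $\kappa\in(0,\frac1{2d}]$. $L_\omega u(x)=\sum_{i=1}^d\frac{\omega_i(x)}{2\mathrm{tr}\,\omega(x)}[u(x+e_i)+u(x-e_i)-2u(x)]$. $B_r=\{x\in\mathbb Z^d:|x|<r\}$. *)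

theory Defs
  imports "HOL-Analysis.Analysis"
begin

text \<open>Points of Z^d are vectors int^'d (the dimension d = CARD('d)).
  An environment omega assigns to each lattice point the diagonal entries
  omega x i (i in 'd) of a positive-definite diagonal matrix.\<close>

definition unit_vec :: "'d::finite \<Rightarrow> int ^ 'd" where
  "unit_vec i = (\<chi> j. if j = i then 1 else 0)"

definition tr_env :: "(int ^ 'd \<Rightarrow> 'd::finite \<Rightarrow> real) \<Rightarrow> int ^ 'd \<Rightarrow> real" where
  "tr_env \<omega> x = (\<Sum>i\<in>UNIV. \<omega> x i)"

definition L_env :: "(int ^ 'd \<Rightarrow> 'd::finite \<Rightarrow> real) \<Rightarrow> (int ^ 'd \<Rightarrow> real) \<Rightarrow> int ^ 'd \<Rightarrow> real" where
  "L_env \<omega> u x = (\<Sum>i\<in>UNIV. \<omega> x i / (2 * tr_env \<omega> x) *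
        (u (x + unit_vec i) + u (x - unit_vec i) - 2 * u x))"

definition lnorm :: "int ^ 'd::finite \<Rightarrow> real" where
  "lnorm x = sqrt (\<Sum>i\<in>UNIV. (real_of_int (x $ i))\<^sup>2)"

definition lball :: "real \<Rightarrow> (int ^ 'd::finite) set" where
  "lball r = {x. lnorm x < r}"

end

theory Submission
  imports Defs
begin

(* Write L u(x) = sum_i a_i (u(x + e_i) + u(x - e_i) - 2 u(x)) with weights
   a_i = omega_i / (2 tr omega) >= kappa summing to 1/2.

   (i) For u = exp(-c|x|), c = 2 alpha / R, a second-order expansion of
   |x +- e_i| = sqrt(|x|^2 +- 2 x_i + 1) bounds the i-th second difference by
   exp(-c|x|) (3 c^2 - c ((|x|^2 - x_i^2) / |x|^3 - 5 / |x|^2)).  Averaged with the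
   weights, the curvature term gives a drift kappa (d - 1) / |x| >= kappa / |x| that
   beats both the O(c) error (alpha < kappa/6) and the O(|x|^-2) error (R >= 20/kappa).

   (ii), (iii) For u = exp(-B|x|^2) the second difference is exactly
   exp(-B|x|^2) (2 exp(-B) cosh(2 B x_i) - 2).  Off the origin some |x_i| >= 1, and
   that single cosh term makes L u >= 0 once kappa exp A >= 1; at the origin
   L u >= -u(0) = -1.  With B = A/R^2 <= 1 and |x| >= R/2, cosh t >= 1 + t^2/4 gives
   2 exp(-B) sum_i a_i cosh(2 B x_i) >= exp(-B) (1 + 2 B^2 kappa |x|^2) > 1. *)

definition elliptic_env :: "real \<Rightarrow> (int ^ 'd \<Rightarrow> 'd::finite \<Rightarrow> real) \<Rightarrow> bool" where
  "elliptic_env \<kappa> \<omega> \<longleftrightarrow> (\<forall>x i. 0 < \<omega> x i) \<and> (\<forall>x i. \<omega> x i / tr_env \<omega> x \<ge> 2 * \<kappa>)"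

definition env_weight :: "(int ^ 'd \<Rightarrow> 'd::finite \<Rightarrow> real) \<Rightarrow> int ^ 'd \<Rightarrow> 'd \<Rightarrow> real" where
  "env_weight \<omega> x i = \<omega> x i / (2 * tr_env \<omega> x)"

lemma L_env_eq_weighted_sum:
  "L_env \<omega> u x = (\<Sum>i\<in>UNIV. env_weight \<omega> x i * (u (x + unit_vec i) + u (x - unit_vec i) - 2 * u x))"
  unfolding L_env_def env_weight_def ..

lemma tr_env_pos:
  assumes "\<And>i. 0 < \<omega> x i"
  shows "0 < tr_env \<omega> x"
  unfolding tr_env_def using assms by (intro sum_pos) auto

lemma sum_env_weight:
  assumes "\<And>i. 0 < \<omega> x i"
  shows "(\<Sum>i\<in>UNIV. env_weight \<omega> x i) = 1/2"
  using tr_env_pos[of \<omega> x, OF assms]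
  unfolding env_weight_def by (simp add: sum_divide_distrib[symmetric] tr_env_def[symmetric])

lemma elliptic_env_pos: "elliptic_env \<kappa> \<omega> \<Longrightarrow> 0 < \<omega> x i"
  unfolding elliptic_env_def by blast

lemma elliptic_env_tr_env_pos: "elliptic_env \<kappa> \<omega> \<Longrightarrow> 0 < tr_env \<omega> x"
  by (rule tr_env_pos) (rule elliptic_env_pos)

lemma elliptic_env_weight_nonneg:
  assumes "elliptic_env \<kappa> \<omega>"
  shows "0 \<le> env_weight \<omega> x i"
  using elliptic_env_pos[OF assms] elliptic_env_tr_env_pos[OF assms]
  unfolding env_weight_def by (simp add: less_imp_le)

lemma elliptic_env_weight_ge:
  assumes "elliptic_env \<kappa> \<omega>"
  shows "\<kappa> \<le> env_weight \<omega> x i"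
proof -
  have "2 * \<kappa> \<le> \<omega> x i / tr_env \<omega> x"
    using assms unfolding elliptic_env_def by blast
  then show ?thesis
    using elliptic_env_tr_env_pos[OF assms] unfolding env_weight_def by (simp add: field_simps)
qed

lemma elliptic_env_weighted_sum_ge:
  assumes "elliptic_env \<kappa> \<omega>" and "\<And>i. 0 \<le> f i"
  shows "\<kappa> * (\<Sum>i\<in>UNIV. f i) \<le> (\<Sum>i\<in>UNIV. env_weight \<omega> x i * f i)"
  unfolding sum_distrib_left
  by (intro sum_mono mult_right_mono elliptic_env_weight_ge assms)

lemma lnorm_nonneg: "0 \<le> lnorm x"
  unfolding lnorm_def by (simp add: sum_nonneg)

lemma lnorm_power2: "(lnorm x)\<^sup>2 = (\<Sum>i\<in>UNIV. (real_of_int (x $ i))\<^sup>2)"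
  unfolding lnorm_def by (simp add: sum_nonneg)

lemma component_power2_le_lnorm: "(real_of_int (x $ i))\<^sup>2 \<le> (lnorm x)\<^sup>2"
  unfolding lnorm_power2 by (rule member_le_sum) auto

lemma abs_component_le_lnorm: "\<bar>real_of_int (x $ i)\<bar> \<le> lnorm x"
  using component_power2_le_lnorm[of x i] lnorm_nonneg[of x] by (metis abs_le_square_iff abs_of_nonneg)

lemma lnorm_add_unit_vec_power2:
  "(lnorm (x + unit_vec i))\<^sup>2 = (lnorm x)\<^sup>2 + 2 * real_of_int (x $ i) + 1"
proof -
  have "(real_of_int ((x + unit_vec i) $ j))\<^sup>2
      = (real_of_int (x $ j))\<^sup>2 + (if j = i then 2 * real_of_int (x $ i) + 1 else 0)" for j
    by (auto simp: unit_vec_def power2_eq_square algebra_simps)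
  then show ?thesis
    unfolding lnorm_power2 by (simp add: sum.distrib)
qed

lemma lnorm_diff_unit_vec_power2:
  "(lnorm (x - unit_vec i))\<^sup>2 = (lnorm x)\<^sup>2 - 2 * real_of_int (x $ i) + 1"
proof -
  have "(real_of_int ((x - unit_vec i) $ j))\<^sup>2
      = (real_of_int (x $ j))\<^sup>2 + (if j = i then 1 - 2 * real_of_int (x $ i) else 0)" for j
    by (auto simp: unit_vec_def power2_eq_square algebra_simps)
  then show ?thesis
    unfolding lnorm_power2 by (simp add: sum.distrib)
qed

lemma elliptic_env_weighted_transverse_ge:
  fixes \<omega> :: "int ^ 'd::finite \<Rightarrow> 'd \<Rightarrow> real"
  assumes "elliptic_env \<kappa> \<omega>"
  shows "\<kappa> * (real CARD('d) - 1) * (lnorm x)\<^sup>2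
    \<le> (\<Sum>i\<in>UNIV. env_weight \<omega> x i * ((lnorm x)\<^sup>2 - (real_of_int (x $ i))\<^sup>2))"
proof -
  have "(\<Sum>i\<in>UNIV. (lnorm x)\<^sup>2 - (real_of_int (x $ i))\<^sup>2) = (real CARD('d) - 1) * (lnorm x)\<^sup>2"
    by (simp add: sum_subtractf lnorm_power2[symmetric] algebra_simps)
  then show ?thesis
    using elliptic_env_weighted_sum_ge[OF assms, of "\<lambda>i. (lnorm x)\<^sup>2 - (real_of_int (x $ i))\<^sup>2" x]
    by (simp add: component_power2_le_lnorm mult.assoc)
qed

lemma exp_le_quadratic:
  fixes t :: real
  assumes "\<bar>t\<bar> \<le> 1"
  shows "exp t \<le> 1 + t + 3/2 * t\<^sup>2"
proof -
  obtain \<tau> where \<tau>: "\<bar>\<tau>\<bar> \<le> \<bar>t\<bar>" "exp t = (\<Sum>m<2. t ^ m / fact m) + exp \<tau> / fact 2 * t\<^sup>2"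
    using Maclaurin_exp_le[of t 2] by blast
  have "exp \<tau> \<le> exp 1"
    using \<tau>(1) assms by simp
  then have "exp \<tau> \<le> 3"
    using exp_le by linarith
  then have "exp \<tau> / 2 * t\<^sup>2 \<le> 3/2 * t\<^sup>2"
    by (intro mult_right_mono) auto
  then show ?thesis
    using \<tau>(2) by (simp add: numeral_2_eq_2)
qed

lemma cosh_ge_quadratic:
  fixes t :: real
  shows "1 + t\<^sup>2 / 4 \<le> cosh t"
proof -
  have "2 + \<bar>t\<bar>\<^sup>2 / 2 \<le> exp \<bar>t\<bar> + exp (- \<bar>t\<bar>)"
    using exp_lower_Taylor_quadratic[of "\<bar>t\<bar>"] exp_ge_add_one_self[of "- \<bar>t\<bar>"] by simp
  then have "1 + t\<^sup>2 / 4 \<le> cosh \<bar>t\<bar>"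
    by (simp add: cosh_def)
  then show ?thesis
    by simp
qed

lemma exp_abs_le_cosh:
  fixes t :: real
  shows "exp \<bar>t\<bar> / 2 \<le> cosh t"
  using cosh_field_def[of "\<bar>t\<bar>"] by simp

lemma sqrt_shift_close:
  fixes r v :: real
  assumes "0 \<le> r" and "\<bar>v - 1\<bar> \<le> 2 * r"
  shows "\<bar>sqrt (r\<^sup>2 + v) - r\<bar> \<le> 1"
proof -
  have "(r - 1)\<^sup>2 \<le> r\<^sup>2 + v" and "r\<^sup>2 + v \<le> (r + 1)\<^sup>2"
    using assms(2) by (auto simp: power2_eq_square algebra_simps abs_le_iff)
  then have "sqrt ((r - 1)\<^sup>2) \<le> sqrt (r\<^sup>2 + v)" and "sqrt (r\<^sup>2 + v) \<le> sqrt ((r + 1)\<^sup>2)"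
    by (blast intro: real_sqrt_le_mono)+
  then have "\<bar>r - 1\<bar> \<le> sqrt (r\<^sup>2 + v)" and "sqrt (r\<^sup>2 + v) \<le> r + 1"
    using assms(1) by simp_all
  then show ?thesis
    by linarith
qed

lemma sqrt_shift_expansion:
  fixes r v :: real
  assumes r: "1 \<le> r" and v: "\<bar>v - 1\<bar> \<le> 2 * r"
  shows "sqrt (r\<^sup>2 + v) - r = (v - (sqrt (r\<^sup>2 + v) - r)\<^sup>2) / (2 * r)"
    and "(sqrt (r\<^sup>2 + v) - r)\<^sup>2 \<le> v\<^sup>2 / (2 * r - 1)\<^sup>2"
proof -
  define s where "s = sqrt (r\<^sup>2 + v)"
  have "(r - 1)\<^sup>2 \<le> r\<^sup>2 + v"
    using v by (auto simp: power2_eq_square algebra_simps abs_le_iff)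
  then have s2: "s\<^sup>2 = r\<^sup>2 + v"
    unfolding s_def by (meson order_trans real_sqrt_pow2 zero_le_power2)
  have "v - (s - r)\<^sup>2 = 2 * r * (s - r)"
    using s2 by (simp add: power2_diff power2_eq_square algebra_simps)
  then show "s - r = (v - (s - r)\<^sup>2) / (2 * r)"
    using r by simp
  have "(s - r) * (s + r) = v"
    using s2 by (simp add: power2_eq_square algebra_simps)
  then have "(s - r)\<^sup>2 * (s + r)\<^sup>2 = v\<^sup>2"
    by (simp add: power_mult_distrib[symmetric])
  moreover have "(2 * r - 1)\<^sup>2 \<le> (s + r)\<^sup>2"
    using sqrt_shift_close[of r v] r v unfolding s_def[symmetric] by (intro power_mono) auto
  ultimately have "(s - r)\<^sup>2 * (2 * r - 1)\<^sup>2 \<le> v\<^sup>2"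
    using mult_left_mono[of _ _ "(s - r)\<^sup>2"] by fastforce
  then show "(s - r)\<^sup>2 \<le> v\<^sup>2 / (2 * r - 1)\<^sup>2"
    using r by (simp add: le_divide_eq)
qed

lemma sqrt_pair_remainder_le:
  fixes r y :: real
  assumes r: "1 \<le> r" and y: "\<bar>y\<bar> \<le> r"
  shows "(4 * y\<^sup>2 + 1) / (r * (2 * r - 1)\<^sup>2) \<le> y\<^sup>2 / r ^ 3 + 5 / r\<^sup>2"
proof -
  have "y\<^sup>2 * (4 * r - 1) \<le> r\<^sup>2 * (4 * r - 1)"
    using y r by (intro mult_right_mono) (auto simp: abs_le_square_iff[symmetric])
  moreover have "r\<^sup>2 \<le> (2 * r - 1)\<^sup>2"
    using r by (intro power_mono) auto
  then have "4 * r * r\<^sup>2 \<le> 4 * r * (2 * r - 1)\<^sup>2"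
    using r by (intro mult_left_mono) auto
  moreover have "0 \<le> r * (2 * r - 1)\<^sup>2"
    using r by simp
  ultimately have "(4 * y\<^sup>2 + 1) * r\<^sup>2 \<le> y\<^sup>2 * (2 * r - 1)\<^sup>2 + 5 * r * (2 * r - 1)\<^sup>2"
    by (simp add: power2_eq_square algebra_simps)
  then have "(4 * y\<^sup>2 + 1) * r\<^sup>2 / (r ^ 3 * (2 * r - 1)\<^sup>2)
      \<le> (y\<^sup>2 * (2 * r - 1)\<^sup>2 + 5 * r * (2 * r - 1)\<^sup>2) / (r ^ 3 * (2 * r - 1)\<^sup>2)"
    using r by (intro divide_right_mono) auto
  moreover have "2 * r - 1 \<noteq> 0"
    using r by simp
  ultimately show ?thesis
    using r by (simp add: power2_eq_square power3_eq_cube add_divide_distrib)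
qed

lemma sqrt_pair_sum_ge:
  fixes r y :: real
  assumes r: "1 \<le> r" and y: "\<bar>y\<bar> \<le> r"
  shows "(r\<^sup>2 - y\<^sup>2) / r ^ 3 - 5 / r\<^sup>2 \<le> sqrt (r\<^sup>2 + 2 * y + 1) + sqrt (r\<^sup>2 - 2 * y + 1) - 2 * r"
proof -
  define d1 where "d1 = sqrt (r\<^sup>2 + (2 * y + 1)) - r"
  define d2 where "d2 = sqrt (r\<^sup>2 + (1 - 2 * y)) - r"
  have v1: "\<bar>(2 * y + 1) - 1\<bar> \<le> 2 * r" and v2: "\<bar>(1 - 2 * y) - 1\<bar> \<le> 2 * r"
    using y by auto
  have "d1 + d2 = (2 * y + 1 - d1\<^sup>2) / (2 * r) + (1 - 2 * y - d2\<^sup>2) / (2 * r)"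
    using sqrt_shift_expansion(1)[OF r v1] sqrt_shift_expansion(1)[OF r v2]
    unfolding d1_def[symmetric] d2_def[symmetric] by linarith
  also have "\<dots> = (2 - (d1\<^sup>2 + d2\<^sup>2)) / (2 * r)"
    unfolding add_divide_distrib[symmetric] by (simp add: algebra_simps)
  also have "\<dots> \<ge> (2 - 2 * (4 * y\<^sup>2 + 1) / (2 * r - 1)\<^sup>2) / (2 * r)"
  proof -
    have "d1\<^sup>2 + d2\<^sup>2 \<le> ((2 * y + 1)\<^sup>2 + (1 - 2 * y)\<^sup>2) / (2 * r - 1)\<^sup>2"
      using sqrt_shift_expansion(2)[OF r v1] sqrt_shift_expansion(2)[OF r v2]
      unfolding d1_def[symmetric] d2_def[symmetric] by (simp add: add_divide_distrib)
    also have "(2 * y + 1)\<^sup>2 + (1 - 2 * y)\<^sup>2 = 2 * (4 * y\<^sup>2 + 1)"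
      by (simp add: power2_eq_square algebra_simps)
    finally show ?thesis
      using r by (intro divide_right_mono) auto
  qed
  finally have "1 / r - (4 * y\<^sup>2 + 1) / (r * (2 * r - 1)\<^sup>2) \<le> d1 + d2"
    using r by (simp add: field_simps)
  moreover have "(4 * y\<^sup>2 + 1) / (r * (2 * r - 1)\<^sup>2) \<le> y\<^sup>2 / r ^ 3 + 5 / r\<^sup>2"
    by (rule sqrt_pair_remainder_le[OF r y])
  moreover have "(r\<^sup>2 - y\<^sup>2) / r ^ 3 = 1 / r - y\<^sup>2 / r ^ 3"
    using r by (simp add: field_simps power2_eq_square power3_eq_cube)
  moreover have "d1 + d2 = sqrt (r\<^sup>2 + 2 * y + 1) + sqrt (r\<^sup>2 - 2 * y + 1) - 2 * r"
    unfolding d1_def d2_def by (simp add: algebra_simps)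
  ultimately show ?thesis
    by linarith
qed

lemma exp_shift_le:
  fixes r s c :: real
  assumes "\<bar>s - r\<bar> \<le> 1" and "0 \<le> c" and "c \<le> 1"
  shows "exp (- c * s) \<le> exp (- c * r) * (1 - c * (s - r) + 3/2 * c\<^sup>2)"
proof -
  have small: "\<bar>c * (s - r)\<bar> \<le> 1"
    using assms by (simp add: abs_mult mult_le_one)
  have "(s - r)\<^sup>2 \<le> 1"
    using power_mono[OF assms(1) abs_ge_zero, of 2] by simp
  then have square: "(c * (s - r))\<^sup>2 \<le> c\<^sup>2"
    using mult_left_mono[of "(s - r)\<^sup>2" 1 "c\<^sup>2"] by (simp add: power_mult_distrib)
  have "exp (- c * s) = exp (- c * r) * exp (- (c * (s - r)))"
    by (simp add: exp_add[symmetric] algebra_simps)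
  also have "\<dots> \<le> exp (- c * r) * (1 - c * (s - r) + 3/2 * c\<^sup>2)"
    using exp_le_quadratic[of "- (c * (s - r))"] small square
    by (intro mult_left_mono) auto
  finally show ?thesis .
qed

lemma exp_sqrt_pair_le:
  fixes r y c :: real
  assumes r: "1 \<le> r" and y: "\<bar>y\<bar> \<le> r" and c: "0 \<le> c" "c \<le> 1"
  shows "exp (- c * sqrt (r\<^sup>2 + 2 * y + 1)) + exp (- c * sqrt (r\<^sup>2 - 2 * y + 1)) - 2 * exp (- c * r)
    \<le> exp (- c * r) * (3 * c\<^sup>2 - c * ((r\<^sup>2 - y\<^sup>2) / r ^ 3 - 5 / r\<^sup>2))"
proof -
  define s1 where "s1 = sqrt (r\<^sup>2 + 2 * y + 1)"
  define s2 where "s2 = sqrt (r\<^sup>2 - 2 * y + 1)"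
  have "\<bar>s1 - r\<bar> \<le> 1" "\<bar>s2 - r\<bar> \<le> 1"
    using sqrt_shift_close[of r "2 * y + 1"] sqrt_shift_close[of r "1 - 2 * y"] r y
    unfolding s1_def s2_def by (simp_all add: algebra_simps)
  then have "exp (- c * s1) + exp (- c * s2) - 2 * exp (- c * r)
      \<le> exp (- c * r) * (1 - c * (s1 - r) + 3/2 * c\<^sup>2) + exp (- c * r) * (1 - c * (s2 - r) + 3/2 * c\<^sup>2)
         - 2 * exp (- c * r)"
    using exp_shift_le[of s1 r c] exp_shift_le[of s2 r c] c by linarith
  also have "\<dots> = exp (- c * r) * (3 * c\<^sup>2 - c * (s1 + s2 - 2 * r))"
    by (simp add: algebra_simps)
  also have "\<dots> \<le> exp (- c * r) * (3 * c\<^sup>2 - c * ((r\<^sup>2 - y\<^sup>2) / r ^ 3 - 5 / r\<^sup>2))"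
    using sqrt_pair_sum_ge[OF r y] c unfolding s1_def s2_def
    by (intro mult_left_mono diff_left_mono mult_left_mono) auto
  finally show ?thesis
    unfolding s1_def s2_def .
qed

lemma elliptic_env_weighted_radial_ge:
  fixes \<omega> :: "int ^ 'd::finite \<Rightarrow> 'd \<Rightarrow> real"
  assumes \<omega>: "elliptic_env \<kappa> \<omega>" and x: "1 \<le> lnorm x"
  shows "\<kappa> * (real CARD('d) - 1) / lnorm x - 5 / (2 * (lnorm x)\<^sup>2)
    \<le> (\<Sum>i\<in>UNIV. env_weight \<omega> x i
          * (((lnorm x)\<^sup>2 - (real_of_int (x $ i))\<^sup>2) / lnorm x ^ 3 - 5 / (lnorm x)\<^sup>2))"
proof -
  define r where "r = lnorm x"
  define a where "a = env_weight \<omega> x"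
  define S where "S = (\<Sum>i\<in>UNIV. a i * (r\<^sup>2 - (real_of_int (x $ i))\<^sup>2))"
  have "\<kappa> * (real CARD('d) - 1) / r = \<kappa> * (real CARD('d) - 1) * r\<^sup>2 / r ^ 3"
    using x unfolding r_def by (simp add: power2_eq_square power3_eq_cube)
  also have "\<dots> \<le> S / r ^ 3"
    using elliptic_env_weighted_transverse_ge[OF \<omega>, of x] x unfolding S_def a_def r_def
    by (intro divide_right_mono) auto
  finally have "\<kappa> * (real CARD('d) - 1) / r \<le> S / r ^ 3" .
  moreover have "(\<Sum>i\<in>UNIV. a i * ((r\<^sup>2 - (real_of_int (x $ i))\<^sup>2) / r ^ 3 - 5 / r\<^sup>2))
      = S / r ^ 3 - 5 / r\<^sup>2 * (\<Sum>i\<in>UNIV. a i)"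
    unfolding S_def
    by (simp add: right_diff_distrib diff_divide_distrib sum_subtractf sum_divide_distrib
        sum_distrib_left sum_distrib_right mult_ac)
  moreover have "(\<Sum>i\<in>UNIV. a i) = 1/2"
    unfolding a_def using elliptic_env_pos[OF \<omega>] by (rule sum_env_weight)
  ultimately show ?thesis
    unfolding a_def r_def by simp
qed

lemma L_env_exp_lnorm_le:
  fixes \<omega> :: "int ^ 'd::finite \<Rightarrow> 'd \<Rightarrow> real"
  assumes \<omega>: "elliptic_env \<kappa> \<omega>" and x: "1 \<le> lnorm x" and c: "0 \<le> c" "c \<le> 1"
  shows "L_env \<omega> (\<lambda>y. exp (- c * lnorm y)) x
    \<le> c * exp (- c * lnorm x)
        * (3/2 * c + 5 / (2 * (lnorm x)\<^sup>2) - \<kappa> * (real CARD('d) - 1) / lnorm x)"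
proof -
  define r where "r = lnorm x"
  define a where "a = env_weight \<omega> x"
  define T where "T i = (r\<^sup>2 - (real_of_int (x $ i))\<^sup>2) / r ^ 3 - 5 / r\<^sup>2" for i
  have r: "1 \<le> r"
    using x unfolding r_def .
  have "L_env \<omega> (\<lambda>y. exp (- c * lnorm y)) x \<le> (\<Sum>i\<in>UNIV. a i * (exp (- c * r) * (3 * c\<^sup>2 - c * T i)))"
    unfolding L_env_eq_weighted_sum a_def
  proof (intro sum_mono mult_left_mono elliptic_env_weight_nonneg[OF \<omega>])
    fix i
    have "lnorm (x + unit_vec i) = sqrt (r\<^sup>2 + 2 * real_of_int (x $ i) + 1)"
      unfolding r_def by (metis lnorm_add_unit_vec_power2 lnorm_nonneg real_sqrt_unique)
    moreover have "lnorm (x - unit_vec i) = sqrt (r\<^sup>2 - 2 * real_of_int (x $ i) + 1)"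
      unfolding r_def by (metis lnorm_diff_unit_vec_power2 lnorm_nonneg real_sqrt_unique)
    ultimately show "exp (- c * lnorm (x + unit_vec i)) + exp (- c * lnorm (x - unit_vec i))
        - 2 * exp (- c * lnorm x) \<le> exp (- c * r) * (3 * c\<^sup>2 - c * T i)"
      using exp_sqrt_pair_le[OF r _ c, of "real_of_int (x $ i)"] abs_component_le_lnorm[of x i]
      unfolding T_def r_def by simp
  qed
  also have "\<dots> = exp (- c * r) * (3 * c\<^sup>2 * (\<Sum>i\<in>UNIV. a i) - c * (\<Sum>i\<in>UNIV. a i * T i))"
    by (simp add: right_diff_distrib sum_subtractf sum_distrib_left sum_distrib_right mult_ac)
  also have "\<dots> \<le> exp (- c * r) * (3 * c\<^sup>2 / 2 - c * (\<kappa> * (real CARD('d) - 1) / r - 5 / (2 * r\<^sup>2)))"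
  proof -
    have "c * (\<kappa> * (real CARD('d) - 1) / r - 5 / (2 * r\<^sup>2)) \<le> c * (\<Sum>i\<in>UNIV. a i * T i)"
      using elliptic_env_weighted_radial_ge[OF \<omega> x] c unfolding a_def T_def r_def
      by (intro mult_left_mono) auto
    moreover have sum_a: "(\<Sum>i\<in>UNIV. a i) = 1/2"
      unfolding a_def using elliptic_env_pos[OF \<omega>] by (rule sum_env_weight)
    ultimately show ?thesis
      unfolding sum_a by (intro mult_left_mono) auto
  qed
  finally show ?thesis
    unfolding r_def by (simp add: algebra_simps power2_eq_square)
qed

lemma L_env_exp_radial_nonpos:
  fixes \<omega> :: "int ^ 'd::finite \<Rightarrow> 'd \<Rightarrow> real"
  assumes \<omega>: "elliptic_env \<kappa> \<omega>" and d: "2 \<le> CARD('d)" and \<kappa>: "0 < \<kappa>" "\<kappa> \<le> 1"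
    and \<alpha>: "0 < \<alpha>" "\<alpha> \<le> \<kappa> / 6" and R: "20 / \<kappa> \<le> R" and x: "x \<in> lball R - lball (R / 2)"
  shows "L_env \<omega> (\<lambda>y. exp (- 2 * \<alpha> * lnorm y / R)) x \<le> 0"
proof -
  define r where "r = lnorm x"
  define c where "c = 2 * \<alpha> / R"
  have r: "R / 2 \<le> r" "r < R"
    using x unfolding r_def lball_def by auto
  have "20 \<le> 20 / \<kappa>"
    using \<kappa> by (simp add: field_simps)
  then have "20 \<le> R"
    using R by linarith
  then have r1: "1 \<le> r" and c: "0 \<le> c" "c \<le> 1"
    using r \<alpha> \<kappa> unfolding c_def by auto
  have "3/2 * c \<le> \<kappa> / (2 * r)"
  proof -
    have "3/2 * c \<le> \<kappa> / (2 * R)"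
      using \<alpha> \<open>20 \<le> R\<close> unfolding c_def by (simp add: field_simps)
    also have "\<dots> \<le> \<kappa> / (2 * r)"
      using r r1 \<kappa> by (intro divide_left_mono) auto
    finally show ?thesis .
  qed
  moreover have "5 / (2 * r\<^sup>2) \<le> \<kappa> / (2 * r)"
  proof -
    have "20 \<le> \<kappa> * R"
      using R \<kappa> by (simp add: field_simps)
    moreover have "\<kappa> * (R / 2) \<le> \<kappa> * r"
      using r \<kappa> by (intro mult_left_mono) auto
    ultimately have "5 \<le> \<kappa> * r"
      by linarith
    then show ?thesis
      using r1 by (simp add: field_simps power2_eq_square)
  qed
  moreover have "\<kappa> / r \<le> \<kappa> * (real CARD('d) - 1) / r"
    using d \<kappa> r1 by (intro divide_right_mono) auto
  ultimately have "3/2 * c + 5 / (2 * r\<^sup>2) - \<kappa> * (real CARD('d) - 1) / r \<le> 0"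
    by simp
  then have "c * exp (- c * r) * (3/2 * c + 5 / (2 * r\<^sup>2) - \<kappa> * (real CARD('d) - 1) / r) \<le> 0"
    using c by (intro mult_nonneg_nonpos) auto
  moreover have f_eq: "(\<lambda>y. exp (- 2 * \<alpha> * lnorm y / R)) = (\<lambda>y. exp (- c * lnorm y))"
    unfolding c_def by (simp add: field_simps)
  ultimately show ?thesis
    unfolding f_eq using L_env_exp_lnorm_le[OF \<omega> r1[unfolded r_def] c] unfolding r_def by linarith
qed

lemma L_env_exp_gauss_eq:
  fixes \<omega> :: "int ^ 'd::finite \<Rightarrow> 'd \<Rightarrow> real"
  assumes "\<And>i. 0 < \<omega> x i"
  shows "L_env \<omega> (\<lambda>y. exp (- B * (lnorm y)\<^sup>2)) x
    = exp (- B * (lnorm x)\<^sup>2)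
        * (2 * exp (- B) * (\<Sum>i\<in>UNIV. env_weight \<omega> x i * cosh (2 * B * real_of_int (x $ i))) - 1)"
proof -
  define U where "U = exp (- B * (lnorm x)\<^sup>2)"
  define C where "C i = cosh (2 * B * real_of_int (x $ i))" for i
  have "exp (- B * (lnorm (x + unit_vec i))\<^sup>2) + exp (- B * (lnorm (x - unit_vec i))\<^sup>2) - 2 * U
      = U * (2 * exp (- B) * C i - 2)" for i
    unfolding lnorm_add_unit_vec_power2 lnorm_diff_unit_vec_power2 U_def C_def cosh_field_def
    by (simp add: exp_add[symmetric] algebra_simps)
  then have "L_env \<omega> (\<lambda>y. exp (- B * (lnorm y)\<^sup>2)) x
      = (\<Sum>i\<in>UNIV. env_weight \<omega> x i * (U * (2 * exp (- B) * C i - 2)))"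
    unfolding L_env_eq_weighted_sum U_def by simp
  also have "\<dots> = U * (2 * exp (- B) * (\<Sum>i\<in>UNIV. env_weight \<omega> x i * C i) - 2 * (\<Sum>i\<in>UNIV. env_weight \<omega> x i))"
    by (simp add: right_diff_distrib sum_subtractf sum_distrib_left sum_distrib_right mult_ac)
  finally show ?thesis
    unfolding sum_env_weight[of \<omega> x, OF assms] U_def C_def by simp
qed

lemma L_env_exp_gauss_ge:
  fixes \<omega> :: "int ^ 'd::finite \<Rightarrow> 'd \<Rightarrow> real"
  assumes \<omega>: "elliptic_env \<kappa> \<omega>" and A: "0 \<le> A" and \<kappa>A: "1 \<le> \<kappa> * exp A"
  shows "- (if x = 0 then 1 else 0) \<le> L_env \<omega> (\<lambda>y. exp (- A * (lnorm y)\<^sup>2)) x"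
proof -
  define S where "S = (\<Sum>i\<in>UNIV. env_weight \<omega> x i * cosh (2 * A * real_of_int (x $ i)))"
  have L: "L_env \<omega> (\<lambda>y. exp (- A * (lnorm y)\<^sup>2)) x = exp (- A * (lnorm x)\<^sup>2) * (2 * exp (- A) * S - 1)"
    unfolding S_def using elliptic_env_pos[OF \<omega>] by (rule L_env_exp_gauss_eq)
  show ?thesis
  proof (cases "x = 0")
    case True
    have "0 \<le> S"
      unfolding S_def by (intro sum_nonneg mult_nonneg_nonneg elliptic_env_weight_nonneg[OF \<omega>]) simp
    then show ?thesis
      using L True by (simp add: lnorm_def)
  next
    case False
    then obtain j where "x $ j \<noteq> 0"
      by (auto simp: vec_eq_iff)
    then have "1 \<le> \<bar>real_of_int (x $ j)\<bar>"
      by linarith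
    then have "2 * A * 1 \<le> \<bar>2 * A * real_of_int (x $ j)\<bar>"
      using A by (simp add: abs_mult mult_le_cancel_left1)
    then have "exp (2 * A) \<le> exp \<bar>2 * A * real_of_int (x $ j)\<bar>"
      by simp
    then have "exp (2 * A) / 2 \<le> cosh (2 * A * real_of_int (x $ j))"
      using exp_abs_le_cosh[of "2 * A * real_of_int (x $ j)"] by linarith
    then have "\<kappa> * (exp (2 * A) / 2) \<le> env_weight \<omega> x j * cosh (2 * A * real_of_int (x $ j))"
      using elliptic_env_weight_ge[OF \<omega>] elliptic_env_weight_nonneg[OF \<omega>] by (intro mult_mono) auto
    also have "\<dots> \<le> S"
      unfolding S_def
      by (intro member_le_sum mult_nonneg_nonneg elliptic_env_weight_nonneg[OF \<omega>]) auto
    finally have "exp (- A) * (\<kappa> * exp (2 * A) / 2) \<le> exp (- A) * S"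
      by simp
    moreover have "exp (- A) * (\<kappa> * exp (2 * A) / 2) = \<kappa> * exp A / 2"
      by (simp add: mult_exp_exp mult_ac)
    ultimately have "1 \<le> 2 * exp (- A) * S"
      using \<kappa>A by linarith
    then show ?thesis
      using L False by simp
  qed
qed

lemma L_env_exp_gauss_pos:
  fixes \<omega> :: "int ^ 'd::finite \<Rightarrow> 'd \<Rightarrow> real"
  assumes \<omega>: "elliptic_env \<kappa> \<omega>" and B: "0 < B" "B \<le> 1" and x: "1 < \<kappa> * B * (lnorm x)\<^sup>2"
  shows "0 < L_env \<omega> (\<lambda>y. exp (- B * (lnorm y)\<^sup>2)) x"
proof -
  define a where "a = env_weight \<omega> x"
  define S where "S = (\<Sum>i\<in>UNIV. a i * cosh (2 * B * real_of_int (x $ i)))"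
  have L: "L_env \<omega> (\<lambda>y. exp (- B * (lnorm y)\<^sup>2)) x = exp (- B * (lnorm x)\<^sup>2) * (2 * exp (- B) * S - 1)"
    unfolding S_def a_def using elliptic_env_pos[OF \<omega>] by (rule L_env_exp_gauss_eq)
  have "(\<Sum>i\<in>UNIV. a i * (1 + B\<^sup>2 * (real_of_int (x $ i))\<^sup>2)) \<le> S"
    unfolding S_def a_def
  proof (intro sum_mono mult_left_mono elliptic_env_weight_nonneg[OF \<omega>])
    show "1 + B\<^sup>2 * (real_of_int (x $ i))\<^sup>2 \<le> cosh (2 * B * real_of_int (x $ i))" for i
      using cosh_ge_quadratic[of "2 * B * real_of_int (x $ i)"] by (simp add: power_mult_distrib)
  qed
  moreover have "(\<Sum>i\<in>UNIV. a i * (1 + B\<^sup>2 * (real_of_int (x $ i))\<^sup>2))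
      = 1/2 + B\<^sup>2 * (\<Sum>i\<in>UNIV. a i * (real_of_int (x $ i))\<^sup>2)"
    using sum_env_weight[of \<omega> x, OF elliptic_env_pos[OF \<omega>]] unfolding a_def
    by (simp add: distrib_left sum.distrib sum_distrib_left mult_ac)
  moreover have "\<kappa> * (lnorm x)\<^sup>2 \<le> (\<Sum>i\<in>UNIV. a i * (real_of_int (x $ i))\<^sup>2)"
    unfolding a_def lnorm_power2 by (intro elliptic_env_weighted_sum_ge[OF \<omega>]) simp
  then have "B\<^sup>2 * (\<kappa> * (lnorm x)\<^sup>2) \<le> B\<^sup>2 * (\<Sum>i\<in>UNIV. a i * (real_of_int (x $ i))\<^sup>2)"
    by (simp add: mult_left_mono)
  ultimately have "1/2 + B\<^sup>2 * (\<kappa> * (lnorm x)\<^sup>2) \<le> S"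
    by linarith
  moreover have "exp B < 1 + 2 * B\<^sup>2 * (\<kappa> * (lnorm x)\<^sup>2)"
  proof -
    have "exp B \<le> 1 + B + B\<^sup>2"
      using exp_bound B by simp
    also have "\<dots> \<le> 1 + 2 * B"
      using B by (simp add: power2_eq_square mult_le_cancel_left1)
    also have "\<dots> < 1 + 2 * B * (\<kappa> * B * (lnorm x)\<^sup>2)"
      using B x by simp
    finally show ?thesis
      by (simp add: power2_eq_square mult_ac)
  qed
  ultimately have "1 < 2 * exp (- B) * S"
    by (simp add: exp_minus field_simps)
  then show ?thesis
    using L by simp
qed

lemma L_env_exp_gauss_scaled_pos:
  fixes \<omega> :: "int ^ 'd::finite \<Rightarrow> 'd \<Rightarrow> real"
  assumes \<omega>: "elliptic_env \<kappa> \<omega>" and A: "1 \<le> A" "4 < \<kappa> * A"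
    and R: "A\<^sup>2 \<le> R" and x: "x \<in> lball R - lball (R / 2)"
  shows "0 < L_env \<omega> (\<lambda>y. exp (- A * (lnorm y)\<^sup>2 / R\<^sup>2)) x"
proof -
  define B where "B = A / R\<^sup>2"
  have "A \<le> A\<^sup>2"
    using A by (simp add: power2_eq_square)
  then have R1: "1 \<le> R"
    using A R by linarith
  moreover have "R \<le> R\<^sup>2"
    using R1 by (simp add: power2_eq_square)
  ultimately have "A \<le> R\<^sup>2"
    using R \<open>A \<le> A\<^sup>2\<close> by linarith
  then have B: "0 < B" "B \<le> 1"
    using A R1 unfolding B_def by (auto simp: field_simps)
  have \<kappa>: "0 < \<kappa>"
    using A by (intro zero_less_mult_pos2[of \<kappa> A]) auto
  have "\<kappa> * A / 4 = \<kappa> * B * (R / 2)\<^sup>2"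
    using R1 unfolding B_def by (simp add: field_simps power2_eq_square)
  also have "\<dots> \<le> \<kappa> * B * (lnorm x)\<^sup>2"
    using x R1 \<kappa> B unfolding lball_def by (intro mult_left_mono power_mono) auto
  finally have "1 < \<kappa> * B * (lnorm x)\<^sup>2"
    using A by linarith
  moreover have f_eq: "(\<lambda>y. exp (- A * (lnorm y)\<^sup>2 / R\<^sup>2)) = (\<lambda>y. exp (- B * (lnorm y)\<^sup>2))"
    unfolding B_def by simp
  ultimately show ?thesis
    unfolding f_eq using L_env_exp_gauss_pos[OF \<omega> B] by blast
qed

theorem lemma2p2:
  fixes \<kappa> :: real
  assumes d2: "CARD('d::finite) \<ge> 2"
    and \<kappa>pos: "0 < \<kappa>" and \<kappa>le: "\<kappa> \<le> 1 / (2 * real CARD('d))"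
  shows "\<exists>\<alpha>0 A0::real. 0 < \<alpha>0 \<and> \<alpha>0 < 1 \<and> 1 \<le> A0 \<and>
    (\<forall>\<omega> :: int ^ 'd \<Rightarrow> 'd \<Rightarrow> real.
       (\<forall>x i. 0 < \<omega> x i) \<and> (\<forall>x i. \<omega> x i / tr_env \<omega> x \<ge> 2 * \<kappa>) \<longrightarrow>
       (\<forall>\<alpha> A::real. 0 < \<alpha> \<and> \<alpha> < \<alpha>0 \<and> A0 \<le> A \<longrightarrow>
          (\<forall>R::real. A0 \<le> R \<longrightarrow>
             (\<forall>x \<in> lball R - lball (R / 2).
                L_env \<omega> (\<lambda>y. exp (- 2 * \<alpha> * lnorm y / R)) x \<le> 0)) \<and>
          (\<forall>x. L_env \<omega> (\<lambda>y. exp (- A * (lnorm y)\<^sup>2)) x \<ge> - (if x = 0 then 1 else 0)) \<and>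
          (\<forall>R::real. A\<^sup>2 \<le> R \<longrightarrow>
             (\<forall>x \<in> lball R - lball (R / 2).
                L_env \<omega> (\<lambda>y. exp (- A * (lnorm y)\<^sup>2 / R\<^sup>2)) x > 0))))"
proof -
  have "1 / (2 * real CARD('d)) \<le> 1"
    using d2 by (simp add: field_simps)
  then have \<kappa>: "0 < \<kappa>" "\<kappa> \<le> 1"
    using \<kappa>pos \<kappa>le by linarith+
  have A_large: "0 \<le> A" "1 \<le> A" "4 < \<kappa> * A" "1 \<le> \<kappa> * exp A" if "20 / \<kappa> \<le> A" for A
  proof -
    have "0 \<le> A" "20 \<le> \<kappa> * A"
      using that \<kappa> by (auto simp: field_simps intro: order_trans[of 0 "20 / \<kappa>"])
    moreover have "A \<le> exp A"
      using exp_ge_add_one_self[of A] by linarith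
    then have "\<kappa> * A \<le> A" "\<kappa> * A \<le> \<kappa> * exp A"
      using \<open>0 \<le> A\<close> \<kappa> by (auto simp: mult_left_le_one_le)
    ultimately show "0 \<le> A" "1 \<le> A" "4 < \<kappa> * A" "1 \<le> \<kappa> * exp A"
      by linarith+
  qed
  show ?thesis
    unfolding elliptic_env_def[symmetric]
  proof (rule exI[of _ "\<kappa> / 6"], rule exI[of _ "20 / \<kappa>"], intro conjI allI impI ballI; (elim conjE)?)
    show "0 < \<kappa> / 6" "\<kappa> / 6 < 1" "1 \<le> 20 / \<kappa>"
      using \<kappa> by (auto simp: field_simps)
  next
    fix \<omega> :: "int ^ 'd \<Rightarrow> 'd \<Rightarrow> real" and \<alpha> R :: real and x :: "int ^ 'd"
    assume "elliptic_env \<kappa> \<omega>" "0 < \<alpha>" "\<alpha> < \<kappa> / 6" "20 / \<kappa> \<le> R" "x \<in> lball R - lball (R / 2)"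
    then show "L_env \<omega> (\<lambda>y. exp (- 2 * \<alpha> * lnorm y / R)) x \<le> 0"
      using \<kappa> d2 by (intro L_env_exp_radial_nonpos) auto
  next
    fix \<omega> :: "int ^ 'd \<Rightarrow> 'd \<Rightarrow> real" and A :: real and x :: "int ^ 'd"
    assume "elliptic_env \<kappa> \<omega>" "20 / \<kappa> \<le> A"
    then show "- (if x = 0 then 1 else 0) \<le> L_env \<omega> (\<lambda>y. exp (- A * (lnorm y)\<^sup>2)) x"
      using A_large[of A] by (intro L_env_exp_gauss_ge) auto
  next
    fix \<omega> :: "int ^ 'd \<Rightarrow> 'd \<Rightarrow> real" and A R :: real and x :: "int ^ 'd"
    assume "elliptic_env \<kappa> \<omega>" "20 / \<kappa> \<le> A" "A\<^sup>2 \<le> R" "x \<in> lball R - lball (R / 2)"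
    then show "0 < L_env \<omega> (\<lambda>y. exp (- A * (lnorm y)\<^sup>2 / R\<^sup>2)) x"
      using A_large[of A] by (intro L_env_exp_gauss_scaled_pos) auto
  qed
qed

end
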